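(* Let $\ell \ge q \ge 1$. Let $\mathbf{z} \in \mathbb{R}^{\ell}$ (the observations), let $\boldsymbol\Gamma_q$ be a real $\ell \times q$ matrix of full column rank (the truncated basis), and let $\boldsymbol\Sigma_{\mathbf{e}}, \boldsymbol\Sigma_{\boldsymbol\eta}$ be $\ell\times\ell$ symmetric positive definite matrices (observation error and model discrepancy variances). For an input $\mathbf{x}$, let $\mathrm{E}[\mathbf{c}(\mathbf{x})] \in \mathbb{R}^q$ and let $\mathrm{Var}[\mathbf{c}(\mathbf{x})]$ be a $q\times q$ symmetric positive semidefinite matrix (emulator mean and variance of the basis coefficients), and set $\mathrm{E}[f(\mathbf{x})] = \boldsymbol\Gamma_q \mathrm{E}[\mathbf{c}(\mathbf{x})]$ and $\mathrm{Var}[f(\mathbf{x})] = \boldsymbol\Gamma_q \mathrm{Var}[\mathbf{c}(\mathbf{x})] \boldsymbol\Gamma_q^T$. Define the field implausibility $$\mathcal{I}(\mathbf{x}) = (\mathbf{z} - \mathrm{E}[f(\mathbf{x})])^{T}\big(\mathrm{Var}[f(\mathbf{x})] + \boldsymbol\Sigma_{\mathbf{e}} + \boldsymbol\Sigma_{\boldsymbol\eta}\big)^{-1} (\mathbf{z} - \mathrm{E}[f(\mathbf{x})]).$$ Let $\mathbf{W} = \boldsymbol\Sigma_{\mathbf{e}} + \boldsymbol\Sigma_{\boldsymbol\eta}$ and $\boldsymbol\Psi = \boldsymbol\Gamma_q^T \mathbf{W}^{-1}\boldsymbol\Gamma_q$. Define the reconstruction error $$\mathcal{R}_{\mathbf{W}}(\boldsymbol\Gamma_q,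 \mathbf{z}) = \big(\mathbf{z} - \boldsymbol\Gamma_q \boldsymbol\Psi^{-1}\boldsymbol\Gamma_q^T\mathbf{W}^{-1}\mathbf{z}\big)^T \mathbf{W}^{-1}\big(\mathbf{z} - \boldsymbol\Gamma_q \boldsymbol\Psi^{-1}\boldsymbol\Gamma_q^T\mathbf{W}^{-1}\mathbf{z}\big),$$ the projected quantities $\mathbf{c}(\mathbf{z}) = \boldsymbol\Psi^{-1}\boldsymbol\Gamma_q^T\mathbf{W}^{-1}\mathbf{z}$, $\mathrm{Var}[\mathbf{c}(\mathbf{e})] = \boldsymbol\Psi^{-1}\boldsymbol\Gamma_q^T\mathbf{W}^{-1}\boldsymbol\Sigma_{\mathbf{e}}\mathbf{W}^{-1}\boldsymbol\Gamma_q\boldsymbol\Psi^{-T}$, $\mathrm{Var}[\mathbf{c}(\boldsymbol\eta)] = \boldsymbol\Psi^{-1}\boldsymbol\Gamma_q^T\mathbf{W}^{-1}\boldsymbol\Sigma_{\boldsymbol\eta}\mathbf{W}^{-1}\boldsymbol\Gamma_q\boldsymbol\Psi^{-T}$, and the coefficient implausibility $$\tilde{\mathcal{I}}_{\mathbf{W}}(\mathbf{x}) = (\mathbf{c}(\mathbf{z}) - \mathrm{E}[\mathbf{c}(\mathbf{x})])^{T}\big(\mathrm{Var}[\mathbf{c}(\mathbf{x})] + \mathrm{Var}[\mathbf{c}(\mathbf{e})] + \mathrm{Var}[\mathbf{c}(\boldsymbol\eta)]\big)^{-1} (\mathbf{c}(\mathbf{z}) - \mathrm{E}[\mathbf{c}(\mathbf{x})]).$$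 Then $$\mathcal{I}(\mathbf{x}) = \mathcal{R}_{\mathbf{W}}(\boldsymbol\Gamma_q, \mathbf{z}) + \tilde{\mathcal{I}}_{\mathbf{W}}(\mathbf{x}).$$
   Context: This is the setting of history matching a computer model with $\ell$-dimensional output $f(\mathbf{x})$ emulated through coefficients on a $q$-dimensional basis $\boldsymbol\Gamma_q$ (columns are basis vectors), with statistical model $\mathbf{z} = f(\mathbf{x}^* ) + \boldsymbol\eta + \mathbf{e}$, where $\boldsymbol\eta$ and $\mathbf{e}$ are uncorrelated mean-zero terms with variances $\boldsymbol\Sigma_{\boldsymbol\eta}$ and $\boldsymbol\Sigma_{\mathbf{e}}$. All projections of $\ell$-dimensional quantities onto the basis are performed in the weighted norm with weight matrix $\mathbf{W}$, i.e. a vector $\mathbf{v}$ is projected to coefficients $(\boldsymbol\Gamma_q^T\mathbf{W}^{-1}\boldsymbol\Gamma_q)^{-1}\boldsymbol\Gamma_q^T\mathbf{W}^{-1}\mathbf{v}$. *)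

theory Defs
  imports "HOL-Analysis.Analysis"
begin

definition sym_pos_def :: "real^'n^'n \<Rightarrow> bool" where
  "sym_pos_def A \<longleftrightarrow> transpose A = A \<and> (\<forall>v. v \<noteq> 0 \<longrightarrow> v \<bullet> (A *v v) > 0)"

definition sym_pos_semidef :: "real^'n^'n \<Rightarrow> bool" where
  "sym_pos_semidef A \<longleftrightarrow> transpose A = A \<and> (\<forall>v. v \<bullet> (A *v v) \<ge> 0)"

definition qform :: "real^'n \<Rightarrow> real^'n^'n \<Rightarrow> real" where
  "qform v M = v \<bullet> (M *v v)"

end

theory Submission imports Defs begin

text \<open>Write \<open>W = \<Sigma>\<^sub>e + \<Sigma>\<^sub>\<eta>\<close>, \<open>\<Psi> = \<Gamma>\<^sup>T W\<inverse> \<Gamma>\<close>, \<open>c(z) = \<Psi>\<inverse> \<Gamma>\<^sup>T W\<inverse> z\<close> and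
  \<open>r = z - \<Gamma> c(z)\<close>. Then \<open>z - E[f(x)] = r + \<Gamma> d\<close> with \<open>d = c(z) - E[c(x)]\<close>, and \<open>r\<close> is
  \<open>W\<inverse>\<close>-orthogonal to the range of \<open>\<Gamma>\<close>. The projected variances add up to \<open>\<Psi>\<inverse>\<close>, and one checks
  directly that \<open>(\<Gamma> V \<Gamma>\<^sup>T + W)\<inverse> (r + \<Gamma> d) = W\<inverse> r + W\<inverse> \<Gamma> \<Psi>\<inverse> (V + \<Psi>\<inverse>)\<inverse> d\<close>. Pairing this
  with \<open>r + \<Gamma> d\<close>, the cross terms vanish by orthogonality and \<open>\<Gamma>\<^sup>T W\<inverse> \<Gamma> \<Psi>\<inverse> = 1\<close> turns the
  last term into the coefficient implausibility.\<close>

lemma matrix_add_rdistrib: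
  fixes A B :: "'a::semiring_1^'n^'m" and C :: "'a^'p^'n"
  shows "(A + B) ** C = A ** C + B ** C"
  by (vector matrix_matrix_mult_def sum.distrib[symmetric] field_simps)

lemma matrix_inv_inverse:
  fixes A :: "real^'n^'n"
  assumes "invertible A"
  shows "A ** matrix_inv A = mat 1" "matrix_inv A ** A = mat 1"
proof -
  have "\<exists>A'. A ** A' = mat 1 \<and> A' ** A = mat 1"
    using assms by (simp add: invertible_def)
  then have "A ** matrix_inv A = mat 1 \<and> matrix_inv A ** A = mat 1"
    unfolding matrix_inv_def by (rule someI_ex)
  then show "A ** matrix_inv A = mat 1" "matrix_inv A ** A = mat 1" by auto
qed

lemma matrix_inv_mult_cancel_left:
  fixes A :: "real^'n^'n"
  assumes "invertible A"
  shows "matrix_inv A *v (A *v x) = x"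
  by (simp add: matrix_vector_mul_assoc matrix_inv_inverse[OF assms])

lemma matrix_inv_mult_cancel_right:
  fixes A :: "real^'n^'n"
  assumes "invertible A"
  shows "A *v (matrix_inv A *v x) = x"
  by (simp add: matrix_vector_mul_assoc matrix_inv_inverse[OF assms])

lemma matrix_inv_solve:
  fixes A :: "real^'n^'n"
  assumes "invertible A" and "A *v y = u"
  shows "matrix_inv A *v u = y"
  using matrix_inv_mult_cancel_left[OF assms(1), of y] assms(2) by simp

lemma transpose_matrix_inv_symmetric:
  fixes A :: "real^'n^'n"
  assumes "invertible A" and "transpose A = A"
  shows "transpose (matrix_inv A) = matrix_inv A"
proof -
  have "transpose (matrix_inv A) ** A = mat 1"
    by (metis assms(2) matrix_inv_inverse(1)[OF assms(1)] matrix_transpose_mul transpose_mat)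
  then have "transpose (matrix_inv A) ** A ** matrix_inv A = matrix_inv A" by simp
  then show ?thesis
    by (simp add: matrix_mul_assoc[symmetric] matrix_inv_inverse[OF assms(1)])
qed

lemma inner_transpose_matrix_vector:
  fixes A :: "real^'n^'m"
  shows "x \<bullet> (transpose A *v y) = (A *v x) \<bullet> y"
  by (metis dot_lmul_matrix inner_commute transpose_matrix_vector)

(* Otherwise simp turns \<open>transpose A *v x\<close> into \<open>x v* A\<close> and the transposes disappear. *)
declare transpose_matrix_vector [simp del]

lemma sym_pos_def_invertible:
  fixes A :: "real^'n^'n"
  assumes "sym_pos_def A"
  shows "invertible A"
proof -
  have "\<forall>x. A *v x = 0 \<longrightarrow> x = 0"
    using assms unfolding sym_pos_def_def by (metis inner_zero_right less_irrefl)
  then show ?thesis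
    by (simp add: invertible_left_inverse matrix_left_invertible_ker)
qed

lemma sym_pos_def_matrix_inv:
  fixes A :: "real^'n^'n"
  assumes "sym_pos_def A"
  shows "sym_pos_def (matrix_inv A)"
  unfolding sym_pos_def_def
proof (intro conjI allI impI)
  have A: "invertible A" "transpose A = A"
    using assms sym_pos_def_invertible unfolding sym_pos_def_def by auto
  then show "transpose (matrix_inv A) = matrix_inv A"
    by (rule transpose_matrix_inv_symmetric)
  fix v :: "real^'n"
  assume "v \<noteq> 0"
  define w where "w = matrix_inv A *v v"
  have Aw: "A *v w = v"
    unfolding w_def by (rule matrix_inv_mult_cancel_right[OF A(1)])
  with \<open>v \<noteq> 0\<close> have "w \<noteq> 0" by auto
  then have "w \<bullet> (A *v w) > 0"
    using assms unfolding sym_pos_def_def by blast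
  then show "v \<bullet> (matrix_inv A *v v) > 0"
    using Aw by (simp add: w_def inner_commute)
qed

lemma sym_pos_def_imp_semidef:
  "sym_pos_def A \<Longrightarrow> sym_pos_semidef A"
  unfolding sym_pos_def_def sym_pos_semidef_def
  by (metis inner_zero_left less_eq_real_def)

lemma sym_pos_def_add_semidef:
  fixes A B :: "real^'n^'n"
  assumes "sym_pos_semidef A" and "sym_pos_def B"
  shows "sym_pos_def (A + B)"
  using assms unfolding sym_pos_def_def sym_pos_semidef_def
  by (simp add: transpose_def vec_eq_iff matrix_vector_mult_add_rdistrib inner_add_right
      add_nonneg_pos)

lemma sym_pos_def_congruence:
  fixes A :: "real^'m^'m" and G :: "real^'n^'m"
  assumes "sym_pos_def A" and "inj ((*v) G)"
  shows "sym_pos_def (transpose G ** A ** G)"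
  unfolding sym_pos_def_def
proof (intro conjI allI impI)
  show "transpose (transpose G ** A ** G) = transpose G ** A ** G"
    using assms(1) by (simp add: sym_pos_def_def matrix_transpose_mul matrix_mul_assoc)
  fix v :: "real^'n"
  assume "v \<noteq> 0"
  then have "G *v v \<noteq> 0"
    using assms(2) by (metis inj_eq matrix_vector_mult_0_right)
  then show "v \<bullet> ((transpose G ** A ** G) *v v) > 0"
    using assms(1)
    by (simp add: sym_pos_def_def matrix_vector_mul_assoc[symmetric] inner_transpose_matrix_vector)
qed

lemma sym_pos_semidef_congruence:
  fixes A :: "real^'n^'n" and G :: "real^'n^'m"
  assumes "sym_pos_semidef A"
  shows "sym_pos_semidef (G ** A ** transpose G)"
  using assms unfolding sym_pos_semidef_def
  by (simp add: matrix_transpose_mul matrix_mul_assoc matrix_vector_mul_assoc[symmetric])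
    (metis inner_transpose_matrix_vector transpose_transpose)

lemma weighted_projection_residual_orthogonal:
  fixes Wi :: "real^'l^'l" and G :: "real^'q^'l"
  assumes "invertible (transpose G ** Wi ** G)"
  shows "transpose G *v (Wi *v (z - G *v (matrix_inv (transpose G ** Wi ** G)
           *v (transpose G *v (Wi *v z))))) = 0"
  using matrix_inv_mult_cancel_right[OF assms]
  by (simp add: matrix_vector_mult_diff_distrib matrix_vector_mul_assoc[symmetric])

lemma projected_variances_sum:
  fixes A B Wi :: "real^'l^'l" and G :: "real^'q^'l" and P :: "real^'q^'q"
  assumes "(A + B) ** Wi = mat 1" and "P ** (transpose G ** Wi ** G) = mat 1"
    and "transpose P = P"
  shows "P ** transpose G ** Wi ** A ** Wi ** G ** transpose P
       + P ** transpose G ** Wi ** B ** Wi ** G ** transpose P = P"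
proof -
  have "P ** transpose G ** Wi ** (A + B) ** Wi ** G ** P
      = P ** (transpose G ** Wi ** G) ** P"
    using assms(1) by (metis matrix_mul_assoc matrix_mul_rid)
  also have "\<dots> = P"
    using assms(2) by simp
  finally show ?thesis
    using assms(3) by (simp add: matrix_add_ldistrib matrix_add_rdistrib matrix_mul_assoc)
qed

lemma low_rank_update_right_inverse:
  fixes W Wi :: "real^'l^'l" and G :: "real^'q^'l" and V Psii Si :: "real^'q^'q"
  assumes W: "W ** Wi = mat 1"
    and Psi: "(transpose G ** Wi ** G) ** Psii = mat 1"
    and S: "(V + Psii) ** Si = mat 1"
    and r: "transpose G *v (Wi *v r) = 0"
  shows "(G ** V ** transpose G + W) *v (Wi *v r + Wi *v (G *v (Psii *v (Si *v d))))
       = r + G *v d"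
proof -
  have W_Wi: "W *v (Wi *v v) = v" for v
    using W by (simp add: matrix_vector_mul_assoc)
  have Psi_Psii: "transpose G *v (Wi *v (G *v (Psii *v v))) = v" for v
    using Psi by (metis matrix_vector_mul_assoc matrix_vector_mul_lid)
  have "(G ** V ** transpose G + W) *v (Wi *v r + Wi *v (G *v (Psii *v (Si *v d))))
      = r + G *v ((V + Psii) *v (Si *v d))"
    by (simp add: matrix_vector_mult_add_rdistrib matrix_vector_right_distrib
        matrix_vector_mul_assoc[symmetric] W_Wi r Psi_Psii)
  also have "\<dots> = r + G *v d"
    using S by (simp add: matrix_vector_mul_assoc)
  finally show ?thesis .
qed

lemma qform_low_rank_update_split:
  fixes W :: "real^'l^'l" and G :: "real^'q^'l" and V :: "real^'q^'q"
  assumes W: "sym_pos_def W" and G: "inj ((*v) G)" and V: "sym_pos_semidef V"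
    and r: "transpose G *v (matrix_inv W *v r) = 0"
  shows "qform (r + G *v d) (matrix_inv (G ** V ** transpose G + W))
       = qform r (matrix_inv W)
       + qform d (matrix_inv (V + matrix_inv (transpose G ** matrix_inv W ** G)))"
proof -
  define Wi where "Wi = matrix_inv W"
  define Psi where "Psi = transpose G ** Wi ** G"
  define Psii where "Psii = matrix_inv Psi"
  define Si where "Si = matrix_inv (V + Psii)"
  have Wi: "sym_pos_def Wi"
    unfolding Wi_def using W by (rule sym_pos_def_matrix_inv)
  have Psi: "sym_pos_def Psi"
    unfolding Psi_def using Wi G by (rule sym_pos_def_congruence)
  then have Psii: "sym_pos_def Psii"
    unfolding Psii_def by (rule sym_pos_def_matrix_inv)
  have S: "sym_pos_def (V + Psii)"
    using V Psii by (rule sym_pos_def_add_semidef)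
  have M: "sym_pos_def (G ** V ** transpose G + W)"
    using sym_pos_semidef_congruence[OF V] W by (rule sym_pos_def_add_semidef)
  have inv_M: "matrix_inv (G ** V ** transpose G + W) *v (r + G *v d)
      = Wi *v r + Wi *v (G *v (Psii *v (Si *v d)))"
  proof (rule matrix_inv_solve[OF sym_pos_def_invertible[OF M]])
    show "(G ** V ** transpose G + W) *v (Wi *v r + Wi *v (G *v (Psii *v (Si *v d))))
        = r + G *v d"
      using W Psi S r unfolding Wi_def Psi_def Psii_def Si_def
      by (intro low_rank_update_right_inverse matrix_inv_inverse sym_pos_def_invertible)
  qed
  have r_orth: "(G *v u) \<bullet> (Wi *v r) = 0" "r \<bullet> (Wi *v (G *v u)) = 0" for u
  proof -
    show "(G *v u) \<bullet> (Wi *v r) = 0"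
      using r by (simp add: Wi_def inner_transpose_matrix_vector[symmetric])
    then show "r \<bullet> (Wi *v (G *v u)) = 0"
      using Wi inner_transpose_matrix_vector[of r Wi "G *v u"]
      by (simp add: sym_pos_def_def inner_commute)
  qed
  have Psi_cancel: "(G *v d) \<bullet> (Wi *v (G *v (Psii *v v))) = d \<bullet> v" for v
  proof -
    have "(G *v d) \<bullet> (Wi *v (G *v (Psii *v v))) = d \<bullet> (Psi *v (Psii *v v))"
      by (metis Psi_def inner_transpose_matrix_vector matrix_vector_mul_assoc transpose_transpose)
    also have "\<dots> = d \<bullet> v"
      unfolding Psii_def by (simp add: matrix_inv_mult_cancel_right sym_pos_def_invertible[OF Psi])
    finally show ?thesis .
  qed
  show ?thesis
    unfolding qform_def inv_M Wi_def[symmetric] Psi_def[symmetric] Psii_def[symmetric]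
      Si_def[symmetric]
    by (simp add: inner_add_left inner_add_right Psi_cancel r_orth)
qed

theorem theorem1:
  fixes z :: "real^'l"
    and Gamma :: "real^'q^'l"
    and Sigma_e Sigma_eta :: "real^'l^'l"
    and Ec :: "real^'q"
    and Varc :: "real^'q^'q"
  assumes dims: "CARD('q) \<le> CARD('l)"
    and rank: "rank Gamma = CARD('q)"
    and Se: "sym_pos_def Sigma_e"
    and Seta: "sym_pos_def Sigma_eta"
    and Vc: "sym_pos_semidef Varc"
  shows
    "let Ef = Gamma *v Ec;
         Varf = Gamma ** Varc ** transpose Gamma;
         W = Sigma_e + Sigma_eta;
         Wi = matrix_inv W;
         Psi = transpose Gamma ** Wi ** Gamma;
         Psii = matrix_inv Psi;
         I = qform (z - Ef) (matrix_inv (Varf + Sigma_e + Sigma_eta));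
         r = z - Gamma *v (Psii *v (transpose Gamma *v (Wi *v z)));
         R = qform r Wi;
         cz = Psii *v (transpose Gamma *v (Wi *v z));
         Vce = Psii ** transpose Gamma ** Wi ** Sigma_e ** Wi ** Gamma ** transpose Psii;
         Vceta = Psii ** transpose Gamma ** Wi ** Sigma_eta ** Wi ** Gamma ** transpose Psii;
         It = qform (cz - Ec) (matrix_inv (Varc + Vce + Vceta))
     in I = R + It"
proof -
  define W where "W = Sigma_e + Sigma_eta"
  define Wi where "Wi = matrix_inv W"
  define Psi where "Psi = transpose Gamma ** Wi ** Gamma"
  define Psii where "Psii = matrix_inv Psi"
  define cz where "cz = Psii *v (transpose Gamma *v (Wi *v z))"
  have W: "sym_pos_def W"
    unfolding W_def using sym_pos_def_imp_semidef[OF Se] Seta by (rule sym_pos_def_add_semidef)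
  have G: "inj ((*v) Gamma)"
    using rank by (simp add: full_rank_injective)
  have Psi: "sym_pos_def Psi"
    unfolding Psi_def Wi_def using sym_pos_def_matrix_inv[OF W] G by (rule sym_pos_def_congruence)
  have Psii: "sym_pos_def Psii"
    unfolding Psii_def using Psi by (rule sym_pos_def_matrix_inv)
  have variances: "Psii ** transpose Gamma ** Wi ** Sigma_e ** Wi ** Gamma ** transpose Psii
      + Psii ** transpose Gamma ** Wi ** Sigma_eta ** Wi ** Gamma ** transpose Psii = Psii"
  proof (rule projected_variances_sum)
    show "(Sigma_e + Sigma_eta) ** Wi = mat 1"
      using sym_pos_def_invertible[OF W] by (simp add: Wi_def W_def matrix_inv_inverse)
    show "Psii ** (transpose Gamma ** Wi ** Gamma) = mat 1"
      using sym_pos_def_invertible[OF Psi] by (simp add: Psii_def Psi_def matrix_inv_inverse)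
    show "transpose Psii = Psii"
      using Psii by (simp add: sym_pos_def_def)
  qed
  have residual: "transpose Gamma *v (Wi *v (z - Gamma *v cz)) = 0"
    unfolding cz_def Psii_def Psi_def
    by (rule weighted_projection_residual_orthogonal)
      (rule sym_pos_def_invertible[OF Psi[unfolded Psi_def]])
  have split: "(z - Gamma *v cz) + Gamma *v (cz - Ec) = z - Gamma *v Ec"
    by (simp add: matrix_vector_mult_diff_distrib)
  have "qform (z - Gamma *v Ec) (matrix_inv (Gamma ** Varc ** transpose Gamma + W))
      = qform (z - Gamma *v cz) Wi + qform (cz - Ec) (matrix_inv (Varc + Psii))"
    using qform_low_rank_update_split[OF W G Vc residual[unfolded Wi_def], of "cz - Ec"]
    unfolding split Wi_def Psi_def Psii_def .
  then show ?thesis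
    unfolding Let_def W_def Wi_def Psi_def Psii_def cz_def
    by (simp add: add.assoc variances[unfolded W_def Wi_def Psi_def Psii_def])
qed

end
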